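(* For all real $x>0$, $$\big[\tilde\psi(x)\big]^2=\int_0^\infty dy\,y\,e^{-2xy}\int_0^1du\,\Big\{-1+2\Big(\coth y-\frac1y\Big)\Big(\coth yu-\frac{1}{yu}\Big)-\frac{2}{y(1-u)}\Big[u\Big(\coth yu-\frac1{yu}\Big)-\Big(\coth y-\frac1y\Big)\Big]\Big\}.$$
   Context: $\psi=\Gamma'/\Gamma$ is the digamma function and $\tilde\psi(x):=\psi(x)-\ln x+\frac{1}{2x}$ for $x>0$; it satisfies $\tilde\psi(x)=-\int_0^\infty ds\,e^{-2xs}\big(\coth s-\frac1s\big)$. *)

theory Defs
  imports "HOL-Analysis.Analysis"
begin

definition coth :: "real \<Rightarrow> real" where
  "coth y = cosh y / sinh y"

definition psi_tilde :: "real \<Rightarrow> real" where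
  "psi_tilde x = Digamma x - ln x + 1 / (2 * x)"

end

theory Submission
  imports Defs
begin

(* Write L s = coth s - 1 / s for the Langevin function, 0 <= L <= 1 on (0, oo), and
   F p = int_0^oo exp (- p s) L s ds.  Since coth s (1 - exp (- 2 s)) = 1 + exp (- 2 s), the
   difference F p - F (p + 2) splits into two elementary Laplace integrals and a Frullani
   integral; for p = 2 x it equals psi_tilde (x + 1) - psi_tilde x.  As psi_tilde (x + n) and
   F (2 x + 2 n) both tend to 0, this gives Binet's formula psi_tilde x = - F (2 x).

   Squaring F and substituting s = y u, t = y (1 - u) in the double integral gives
   F p ^ 2 = int_0^oo y exp (- p y) int_0^1 L (y u) L (y (1 - u)) du dy.  Finally, the addition
   law coth (a + b) (coth a + coth b) = 1 + coth a coth b turns L (y u) L (y (1 - u)) into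
   - 1 + K y u + K y (1 - u), where - 1 + 2 K y u is the inner integrand of the theorem, and the
   reflection u -> 1 - u identifies the two inner integrals. *)

lemma sinh_ge_self: "0 \<le> (s::real) \<Longrightarrow> s \<le> sinh s"
  using real_le_x_sinh[of s] by (simp add: sinh_field_def exp_minus)

lemma sinh_le_mult_cosh: "0 \<le> (s::real) \<Longrightarrow> sinh s \<le> s * cosh s"
  using DERIV_nonneg_imp_nondecreasing[of 0 s "\<lambda>t. t * cosh t - sinh t"]
  by (force intro!: derivative_eq_intros)

lemma coth_add:
  fixes a b :: real
  assumes "a \<noteq> 0" "b \<noteq> 0" "a + b \<noteq> 0"
  shows "coth (a + b) * (coth a + coth b) = 1 + coth a * coth b"
proof -
  have "coth a + coth b = sinh (a + b) / (sinh a * sinh b)"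
    using assms unfolding coth_def sinh_add by (simp add: field_simps)
  hence "coth (a + b) * (coth a + coth b) = cosh (a + b) / (sinh a * sinh b)"
    using assms unfolding coth_def by simp
  also have "\<dots> = 1 + coth a * coth b"
    using assms unfolding coth_def cosh_add by (simp add: field_simps)
  finally show ?thesis .
qed

lemma coth_mult_one_minus_exp:
  fixes s :: real
  assumes "s \<noteq> 0"
  shows "coth s * (1 - exp (- 2 * s)) = 1 + exp (- 2 * s)"
proof -
  have "exp (- 2 * s) = exp (- s) * exp (- s)" by (simp flip: exp_add)
  moreover have "exp s * exp (- s) = 1" by (simp flip: exp_add)
  ultimately show ?thesis
    using assms by (simp add: coth_def cosh_field_def sinh_field_def field_simps)
qed

definition langevin :: "real \<Rightarrow> real" where
  "langevin s = coth s - 1 / s"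

lemma langevin_nonneg: "0 < s \<Longrightarrow> 0 \<le> langevin s"
  using sinh_le_mult_cosh[of s] by (simp add: langevin_def coth_def field_simps)

lemma langevin_le_one:
  assumes "0 < s" shows "langevin s \<le> 1"
proof -
  have "s * (cosh s - sinh s) \<le> s"
    using assms by (simp add: cosh_minus_sinh mult_left_le_one_le)
  also have "\<dots> \<le> sinh s" using sinh_ge_self[of s] assms by simp
  finally have "s * (cosh s - sinh s) \<le> sinh s" .
  thus ?thesis using assms by (simp add: langevin_def coth_def field_simps)
qed

lemma has_real_derivative_langevin:
  "0 < s \<Longrightarrow> (langevin has_real_derivative (1 / s\<^sup>2 - 1 / (sinh s)\<^sup>2)) (at s)"
  unfolding langevin_def [abs_def] coth_def
  by (rule derivative_eq_intros refl | simp)+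
     (simp add: field_simps power2_eq_square cosh_square_eq[unfolded power2_eq_square])

lemma langevin_mono:
  assumes "0 < a" "a \<le> b" shows "langevin a \<le> langevin b"
proof (rule DERIV_nonneg_imp_nondecreasing[OF \<open>a \<le> b\<close>])
  fix t assume "a \<le> t" "t \<le> b"
  hence t: "0 < t" using assms by simp
  have "t\<^sup>2 \<le> (sinh t)\<^sup>2" using sinh_ge_self[of t] t by (intro power_mono) auto
  hence "1 / (sinh t)\<^sup>2 \<le> 1 / t\<^sup>2" using t by (intro divide_left_mono) auto
  thus "\<exists>y. (langevin has_real_derivative y) (at t) \<and> 0 \<le> y"
    using has_real_derivative_langevin[OF t] by auto
qed

lemma borel_measurable_langevin [measurable]: "langevin \<in> borel_measurable borel"
proof -
  have [measurable]: "sinh \<in> borel_measurable (borel :: real measure)"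
    "cosh \<in> borel_measurable (borel :: real measure)"
    by (intro borel_measurable_continuous_onI continuous_intros)+
  show ?thesis unfolding langevin_def[abs_def] coth_def by measurable
qed

lemma langevin_mult:
  assumes "0 < a" "0 < b"
  shows "langevin a * langevin b
    = - 1 + (langevin (a + b) * langevin a - (a / (a + b) * langevin a - langevin (a + b)) / b)
          + (langevin (a + b) * langevin b - (b / (a + b) * langevin b - langevin (a + b)) / a)"
proof -
  have "coth (a + b) * (coth a + coth b) = 1 + coth a * coth b"
    using assms by (intro coth_add) auto
  moreover have "a * inverse a = 1" "b * inverse b = 1" "(a + b) * inverse (a + b) = 1"
    using assms by auto
  ultimately show ?thesis
    \<comment> \<open>a polynomial consequence of coth_add once the inverses are ring variables\<close>
    unfolding langevin_def divide_inverse by algebra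
qed

definition langevin_kernel :: "real \<Rightarrow> real \<Rightarrow> real" where
  "langevin_kernel y u =
     langevin y * langevin (y * u) - (u * langevin (y * u) - langevin y) / (y * (1 - u))"

lemma langevin_kernel_add_reflect:
  assumes "0 < y" "0 < u" "u < 1"
  shows "langevin_kernel y u + langevin_kernel y (1 - u)
           = 1 + langevin (y * u) * langevin (y * (1 - u))"
proof -
  have "y * u + y * (1 - u) = y" by (simp add: algebra_simps)
  thus ?thesis
    using langevin_mult[of "y * u" "y * (1 - u)"] assms
    unfolding langevin_kernel_def by simp
qed

lemma langevin_kernel_nonneg:
  assumes "0 < y" "0 < u" "u < 1"
  shows "0 \<le> langevin_kernel y u"
proof -
  have "0 < y * u" using assms by simp
  hence "langevin (y * u) \<le> langevin y" "0 \<le> langevin (y * u)" "0 \<le> langevin y"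
    using langevin_mono[of "y * u" y] langevin_nonneg assms by (auto simp: mult_left_le)
  hence "u * langevin (y * u) \<le> langevin y"
    using assms by (meson less_imp_le mult_left_le_one_le order_trans)
  hence "(u * langevin (y * u) - langevin y) / (y * (1 - u)) \<le> 0"
    using assms by (intro divide_nonpos_pos) auto
  moreover have "0 \<le> langevin y * langevin (y * u)"
    using \<open>0 \<le> langevin (y * u)\<close> \<open>0 \<le> langevin y\<close> by simp
  ultimately show ?thesis unfolding langevin_kernel_def by linarith
qed

lemma langevin_kernel_le_two:
  assumes "0 < y" "0 < u" "u < 1"
  shows "langevin_kernel y u \<le> 2"
proof -
  have "langevin_kernel y u \<le> langevin_kernel y u + langevin_kernel y (1 - u)"
    using langevin_kernel_nonneg[of y "1 - u"] assms by simp
  also have "\<dots> = 1 + langevin (y * u) * langevin (y * (1 - u))"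
    using langevin_kernel_add_reflect[OF assms] .
  also have "langevin (y * u) * langevin (y * (1 - u)) \<le> 1 * 1"
    using assms langevin_nonneg langevin_le_one by (intro mult_mono) auto
  finally show ?thesis by simp
qed

lemma set_integral_eq_of_nn_integral:
  fixes h :: "'a \<Rightarrow> real"
  assumes [measurable]: "h \<in> borel_measurable M" "S \<in> sets M"
    and nonneg: "\<And>s. s \<in> S \<Longrightarrow> 0 \<le> h s"
    and nn: "(\<integral>\<^sup>+s\<in>S. ennreal (h s) \<partial>M) = ennreal r" and "0 \<le> r"
  shows "set_integrable M S h" "(LINT s:S|M. h s) = r"
proof -
  have "has_bochner_integral M (\<lambda>s. indicator S s *\<^sub>R h s) r"
    using nonneg nn \<open>0 \<le> r\<close> unfolding nn_integral_set_ennreal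
    by (intro has_bochner_integral_nn_integral) (auto simp: mult.commute split: split_indicator)
  thus "set_integrable M S h" "(LINT s:S|M. h s) = r"
    unfolding set_integrable_def set_lebesgue_integral_def
    by (auto simp: has_bochner_integral_iff)
qed

lemma nn_integral_eq_set_integral:
  fixes f :: "'a \<Rightarrow> real"
  assumes "set_integrable M A f" "\<And>x. x \<in> A \<Longrightarrow> 0 \<le> f x"
  shows "(\<integral>\<^sup>+x\<in>A. ennreal (f x) \<partial>M) = ennreal (LINT x:A|M. f x)"
  using assms nn_integral_eq_integral[of M "\<lambda>x. indicator A x * f x"]
  unfolding set_integrable_def set_lebesgue_integral_def nn_integral_set_ennreal
  by (simp add: mult.commute indicator_def)

lemma set_integrable_Ioo_bounded:
  fixes f :: "real \<Rightarrow> real"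
  assumes [measurable]: "f \<in> borel_measurable borel" and "\<And>u. u \<in> {a<..<b} \<Longrightarrow> \<bar>f u\<bar> \<le> B"
  shows "set_integrable lborel {a<..<b} f"
  unfolding set_integrable_def
  by (rule integrableI_bounded_set[where A="{a<..<b}" and B=B])
     (use assms emeasure_lborel_box_finite[of a b] in \<open>auto simp: indicator_def\<close>)

lemma nn_integral_exp_Ioi:
  fixes c :: real
  assumes "0 < c"
  shows "(\<integral>\<^sup>+s\<in>{0<..}. ennreal (exp (- c * s)) \<partial>lborel) = ennreal (1 / c)"
proof -
  have "(\<integral>\<^sup>+s\<in>{0<..}. ennreal (exp (- c * s)) \<partial>lborel)
          = (\<integral>\<^sup>+s\<in>{0..}. ennreal (exp (- c * s)) \<partial>lborel)"
    by (intro nn_integral_cong_AE eventually_mono[OF AE_lborel_singleton[of 0]])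
       (auto simp: indicator_def)
  also have "\<dots> = ennreal (1 / c)"
    using nn_integral_has_integral_lebesgue[OF _ has_integral_exp_minus_to_infinity[OF assms, of 0]]
    by (simp add: indicator_mult_ennreal[symmetric] mult.commute)
  finally show ?thesis .
qed

lemma set_integral_exp_Ioi:
  fixes c :: real
  assumes "0 < c"
  shows "set_integrable lborel {0<..} (\<lambda>s. exp (- c * s))"
    and "(LBINT s:{0<..}. exp (- c * s)) = 1 / c"
  using set_integral_eq_of_nn_integral[OF _ _ _ nn_integral_exp_Ioi[OF assms]] assms by auto

lemma nn_integral_frullani_exp:
  fixes a b :: real
  assumes "0 < a" "a \<le> b"
  shows "(\<integral>\<^sup>+s\<in>{0<..}. ennreal ((exp (- a * s) - exp (- b * s)) / s) \<partial>lborel) = ennreal (ln b - ln a)"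
proof -
  have exp_diff_eq: "(exp (- a * s) - exp (- b * s)) / s = (\<integral>\<^sup>+t\<in>{a..b}. ennreal (exp (- t * s)) \<partial>lborel)"
    if "0 < s" for s
  proof -
    have "((\<lambda>t. exp (- t * s)) has_integral (- exp (- b * s) / s - (- exp (- a * s) / s))) {a..b}"
      using assms that
      by (intro fundamental_theorem_of_calculus)
         (auto intro!: derivative_eq_intros simp flip: has_real_derivative_iff_has_vector_derivative)
    from nn_integral_has_integral_lebesgue[OF _ this] show ?thesis
      by (simp add: indicator_mult_ennreal[symmetric] mult.commute diff_divide_distrib)
  qed
  have "((\<lambda>t. 1 / t) has_integral (ln b - ln a)) {a..b}"
    using assms
    by (intro fundamental_theorem_of_calculus)
       (auto intro!: derivative_eq_intros simp flip: has_real_derivative_iff_has_vector_derivative)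
  from nn_integral_has_integral_lebesgue[OF _ this] assms
  have inverse_eq: "(\<integral>\<^sup>+t\<in>{a..b}. ennreal (1 / t) \<partial>lborel) = ennreal (ln b - ln a)"
    by (simp add: nn_integral_set_ennreal mult.commute)
  have "(\<integral>\<^sup>+s\<in>{0<..}. ennreal ((exp (- a * s) - exp (- b * s)) / s) \<partial>lborel)
      = (\<integral>\<^sup>+s. \<integral>\<^sup>+t. ennreal (exp (- t * s)) * indicator {a..b} t * indicator {0<..} s
              \<partial>lborel \<partial>lborel)"
    by (intro nn_integral_cong)
       (use exp_diff_eq in \<open>simp add: nn_integral_multc split: split_indicator\<close>)
  also have "\<dots> = (\<integral>\<^sup>+t. \<integral>\<^sup>+s. ennreal (exp (- t * s)) * indicator {a..b} t * indicator {0<..} s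
                    \<partial>lborel \<partial>lborel)"
    by (subst lborel_pair.Fubini') (auto simp: case_prod_unfold)
  also have "\<dots> = (\<integral>\<^sup>+t\<in>{a..b}. ennreal (1 / t) \<partial>lborel)"
    using assms nn_integral_exp_Ioi
    by (intro nn_integral_cong)
       (auto simp: nn_integral_multc mult.commute[of _ "indicator {a..b} _"] mult.assoc
             split: split_indicator)
  finally show ?thesis using inverse_eq by simp
qed

lemma set_integral_frullani_exp:
  fixes a b :: real
  assumes "0 < a" "a \<le> b"
  shows "set_integrable lborel {0<..} (\<lambda>s. (exp (- a * s) - exp (- b * s)) / s)"
    and "(LBINT s:{0<..}. (exp (- a * s) - exp (- b * s)) / s) = ln b - ln a"
proof -
  have "0 \<le> (exp (- a * s) - exp (- b * s)) / s" if "0 < s" for s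
    using that assms by (intro divide_nonneg_pos) (auto simp: mult_right_mono)
  thus "set_integrable lborel {0<..} (\<lambda>s. (exp (- a * s) - exp (- b * s)) / s)"
    and "(LBINT s:{0<..}. (exp (- a * s) - exp (- b * s)) / s) = ln b - ln a"
    using set_integral_eq_of_nn_integral[OF _ _ _ nn_integral_frullani_exp[OF assms]] assms by auto
qed

lemma nn_integral_Ioi_mult_convolution:
  fixes f g :: "real \<Rightarrow> ennreal"
  assumes [measurable]: "f \<in> borel_measurable borel" "g \<in> borel_measurable borel"
  shows "(\<integral>\<^sup>+s\<in>{0<..}. f s \<partial>lborel) * (\<integral>\<^sup>+t\<in>{0<..}. g t \<partial>lborel)
       = (\<integral>\<^sup>+y\<in>{0<..}. ennreal y * (\<integral>\<^sup>+u\<in>{0<..<1}. f (y * u) * g (y * (1 - u)) \<partial>lborel)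
            \<partial>lborel)"
proof -
  define F G where "F s = f s * indicator {0<..} s" and "G s = g s * indicator {0<..} s"
    for s :: real
  have [measurable]: "F \<in> borel_measurable borel" "G \<in> borel_measurable borel"
    unfolding F_def[abs_def] G_def[abs_def] by measurable
  have shift: "(\<integral>\<^sup>+t. F s * G t \<partial>lborel) = (\<integral>\<^sup>+y. F s * G (y - s) \<partial>lborel)" for s
    using nn_integral_real_affine[of "\<lambda>t. F s * G t" 1 "- s"] by simp
  have rescale: "(\<integral>\<^sup>+s. F s * G (y - s) \<partial>lborel)
      = ennreal y * (\<integral>\<^sup>+u\<in>{0<..<1}. f (y * u) * g (y * (1 - u)) \<partial>lborel) * indicator {0<..} y"
    for y :: real
  proof (cases "0 < y")
    case True
    have "(\<integral>\<^sup>+s. F s * G (y - s) \<partial>lborel)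
        = ennreal y * (\<integral>\<^sup>+u. F (y * u) * G (y - y * u) \<partial>lborel)"
      using nn_integral_real_affine[of "\<lambda>s. F s * G (y - s)" y 0] True by simp
    also have "(\<lambda>u. F (y * u) * G (y - y * u))
        = (\<lambda>u. f (y * u) * g (y * (1 - u)) * indicator {0<..<1} u)"
      using True
      by (auto simp: F_def G_def indicator_def algebra_simps zero_less_mult_iff fun_eq_iff)
    finally show ?thesis using True by simp
  next
    case False
    hence "(\<lambda>s. F s * G (y - s)) = (\<lambda>_. 0)" by (auto simp: F_def G_def indicator_def)
    thus ?thesis using False by simp
  qed
  have "(\<integral>\<^sup>+s\<in>{0<..}. f s \<partial>lborel) * (\<integral>\<^sup>+t\<in>{0<..}. g t \<partial>lborel)
       = (\<integral>\<^sup>+s. \<integral>\<^sup>+t. F s * G t \<partial>lborel \<partial>lborel)"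
    unfolding F_def G_def by (simp add: nn_integral_cmult nn_integral_multc)
  also have "\<dots> = (\<integral>\<^sup>+s. \<integral>\<^sup>+y. F s * G (y - s) \<partial>lborel \<partial>lborel)"
    by (simp only: shift)
  also have "\<dots> = (\<integral>\<^sup>+y. \<integral>\<^sup>+s. F s * G (y - s) \<partial>lborel \<partial>lborel)"
    by (rule lborel_pair.Fubini'[symmetric]) measurable
  finally show ?thesis by (simp only: rescale)
qed

definition langevin_laplace :: "real \<Rightarrow> real" where
  "langevin_laplace p = (LBINT s:{0<..}. exp (- p * s) * langevin s)"

lemma set_integrable_langevin_laplace:
  assumes "0 < p"
  shows "set_integrable lborel {0<..} (\<lambda>s. exp (- p * s) * langevin s)"
  using set_integral_exp_Ioi(1)[OF assms] unfolding set_integrable_def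
  by (rule Bochner_Integration.integrable_bound)
     (use langevin_nonneg langevin_le_one in \<open>auto simp: indicator_def abs_mult\<close>)

lemma langevin_laplace_nonneg: "0 \<le> langevin_laplace p"
  unfolding langevin_laplace_def set_lebesgue_integral_def
  by (intro Bochner_Integration.integral_nonneg) (simp add: langevin_nonneg indicator_def)

lemma langevin_laplace_le:
  assumes "0 < p" shows "langevin_laplace p \<le> 1 / p"
proof -
  have "langevin_laplace p \<le> (LBINT s:{0<..}. exp (- p * s))"
    unfolding langevin_laplace_def
    using set_integrable_langevin_laplace[OF assms] set_integral_exp_Ioi(1)[OF assms]
    by (rule set_integral_mono) (use langevin_le_one in auto)
  thus ?thesis using set_integral_exp_Ioi(2)[OF assms] by simp
qed

lemma langevin_laplace_diff:
  assumes "0 < p"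
  shows "langevin_laplace p - langevin_laplace (p + 2) = 1 / p + 1 / (p + 2) - (ln (p + 2) - ln p)"
proof -
  have "0 < p + 2" using assms by simp
  note exp_p = set_integral_exp_Ioi[OF assms] and exp_p2 = set_integral_exp_Ioi[OF \<open>0 < p + 2\<close>]
  note frullani = set_integral_frullani_exp[of p "p + 2"]
  have pointwise: "exp (- p * s) * langevin s - exp (- (p + 2) * s) * langevin s
      = exp (- p * s) + exp (- (p + 2) * s) - (exp (- p * s) - exp (- (p + 2) * s)) / s"
    if "0 < s" for s
  proof -
    have "exp (- (p + 2) * s) = exp (- p * s) * exp (- 2 * s)"
      by (simp flip: exp_add add: algebra_simps)
    moreover have "exp (- p * s) * (coth s * (1 - exp (- 2 * s))) = exp (- p * s) * (1 + exp (- 2 * s))"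
      using coth_mult_one_minus_exp[of s] that by simp
    ultimately have coth_eq:
      "coth s * (exp (- p * s) - exp (- (p + 2) * s)) = exp (- p * s) + exp (- (p + 2) * s)"
      by (simp add: algebra_simps)
    have "exp (- p * s) * langevin s - exp (- (p + 2) * s) * langevin s
        = coth s * (exp (- p * s) - exp (- (p + 2) * s)) - (exp (- p * s) - exp (- (p + 2) * s)) / s"
      using that by (simp add: langevin_def field_simps)
    thus ?thesis unfolding coth_eq .
  qed
  have "langevin_laplace p - langevin_laplace (p + 2)
      = (LBINT s:{0<..}. exp (- p * s) * langevin s - exp (- (p + 2) * s) * langevin s)"
    unfolding langevin_laplace_def
    using set_integrable_langevin_laplace[OF assms] set_integrable_langevin_laplace[OF \<open>0 < p + 2\<close>]
    by (rule set_integral_diff(2)[symmetric])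
  also have "\<dots> = (LBINT s:{0<..}. exp (- p * s) + exp (- (p + 2) * s)
                    - (exp (- p * s) - exp (- (p + 2) * s)) / s)"
    by (intro set_lebesgue_integral_cong allI impI pointwise) auto
  also have "\<dots> = 1 / p + 1 / (p + 2) - (ln (p + 2) - ln p)"
    using assms exp_p exp_p2 frullani by simp
  finally show ?thesis .
qed

lemma psi_tilde_diff:
  fixes x :: real
  assumes "0 < x"
  shows "psi_tilde x - psi_tilde (x + 1)
           = - (1 / (2 * x) + 1 / (2 * x + 2)) + (ln (2 * x + 2) - ln (2 * x))"
proof -
  have "ln (2 * x + 2) = ln 2 + ln (x + 1)" using assms ln_mult[of 2 "x + 1"] by (simp add: algebra_simps)
  moreover have "ln (2 * x) = ln 2 + ln x" using assms ln_mult[of 2 x] by simp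
  moreover have "Digamma (x + 1) = Digamma x + 1 / x" using Digamma_plus1[of x] assms by simp
  ultimately show ?thesis unfolding psi_tilde_def by (simp add: field_simps)
qed

lemma psi_tilde_plus_langevin_laplace_shift:
  fixes x :: real
  assumes "0 < x"
  shows "psi_tilde (x + real n) + langevin_laplace (2 * (x + real n))
           = psi_tilde x + langevin_laplace (2 * x)"
proof (induction n)
  case (Suc n)
  have "0 < x + real n" using assms by simp
  from langevin_laplace_diff[of "2 * (x + real n)"] psi_tilde_diff[OF this] this Suc.IH
  show ?case by (simp add: algebra_simps)
qed simp

lemma tendsto_psi_tilde_shift:
  fixes x :: real
  assumes "0 < x"
  shows "(\<lambda>n. psi_tilde (x + real n)) \<longlonglongrightarrow> 0"
proof -
  have "psi_tilde (x + real n) = Digamma x - (ln (real n) - (\<Sum>k<n. inverse (x + real k)))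
          + (ln (real n) - ln (x + real n)) + 1 / (2 * (x + real n))" for n
    using Polygamma_plus_of_nat[of n x 0] assms by (simp add: psi_tilde_def divide_inverse)
  moreover have "(\<lambda>n. Digamma x - (ln (real n) - (\<Sum>k<n. inverse (x + real k)))
          + (ln (real n) - ln (x + real n)) + 1 / (2 * (x + real n))) \<longlonglongrightarrow> Digamma x - Digamma x + 0 + 0"
    using Digamma_LIMSEQ[of x] assms by (intro tendsto_intros) (simp_all, real_asymp+)
  ultimately show ?thesis by simp
qed

lemma tendsto_langevin_laplace_at_top:
  "(langevin_laplace \<longlongrightarrow> 0) at_top"
proof (rule tendsto_sandwich[of "\<lambda>_. 0" _ _ "\<lambda>p. 1 / p"])
  show "\<forall>\<^sub>F p in at_top. langevin_laplace p \<le> 1 / p"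
    using eventually_gt_at_top[of 0] by eventually_elim (rule langevin_laplace_le)
  show "((\<lambda>p::real. 1 / p) \<longlongrightarrow> 0) at_top" by real_asymp
qed (simp_all add: langevin_laplace_nonneg)

lemma psi_tilde_eq_neg_langevin_laplace:
  fixes x :: real
  assumes "0 < x"
  shows "psi_tilde x = - langevin_laplace (2 * x)"
proof -
  have "filterlim (\<lambda>n. 2 * (x + real n)) at_top sequentially" by real_asymp
  hence "(\<lambda>n. psi_tilde (x + real n) + langevin_laplace (2 * (x + real n))) \<longlonglongrightarrow> 0 + 0"
    by (intro tendsto_add tendsto_psi_tilde_shift[OF assms]
              filterlim_compose[OF tendsto_langevin_laplace_at_top])
  hence "(\<lambda>n. psi_tilde x + langevin_laplace (2 * x)) \<longlonglongrightarrow> 0"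
    by (simp only: psi_tilde_plus_langevin_laplace_shift[OF assms]) simp
  hence "psi_tilde x + langevin_laplace (2 * x) = 0" by (simp add: LIMSEQ_const_iff)
  thus ?thesis by simp
qed

lemma set_integral_langevin_kernel:
  assumes "0 < y"
  shows "(LBINT u:{0<..<1}. - 1 + 2 * langevin_kernel y u)
           = (LBINT u:{0<..<1}. langevin (y * u) * langevin (y * (1 - u)))"
proof -
  have [measurable]: "(\<lambda>u. langevin_kernel y u) \<in> borel_measurable borel"
    unfolding langevin_kernel_def by measurable
  have bounded: "\<bar>langevin_kernel y u\<bar> \<le> 2" if "u \<in> {0<..<1}" for u
    using that assms langevin_kernel_nonneg langevin_kernel_le_two by (simp add: abs_le_iff)
  have int: "set_integrable lborel {0<..<1} (\<lambda>u. langevin_kernel y u)"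
            "set_integrable lborel {0<..<1} (\<lambda>u. langevin_kernel y (1 - u))"
    using bounded by (auto intro!: set_integrable_Ioo_bounded[where B=2])
  have const: "set_integrable lborel {0<..<1::real} (\<lambda>_. 1 :: real)"
    by (rule set_integrable_Ioo_bounded[where B=1]) auto
  have reflect: "(LBINT u:{0<..<1}. langevin_kernel y (1 - u)) = (LBINT u:{0<..<1}. langevin_kernel y u)"
    unfolding set_lebesgue_integral_def
    by (subst lborel_integral_real_affine[where c="-1" and t=1])
       (auto intro!: Bochner_Integration.integral_cong simp: indicator_def)
  have "(LBINT u:{0<..<1}. - 1 + 2 * langevin_kernel y u)
      = (LBINT u:{0<..<1}. - 1 + langevin_kernel y u + langevin_kernel y (1 - u))"
    using int const reflect by simp
  also have "\<dots> = (LBINT u:{0<..<1}. langevin (y * u) * langevin (y * (1 - u)))"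
    using langevin_kernel_add_reflect[OF assms]
    by (intro set_lebesgue_integral_cong) (auto simp: algebra_simps)
  finally show ?thesis .
qed

lemma set_integrable_langevin_product:
  assumes "0 < y"
  shows "set_integrable lborel {0<..<1} (\<lambda>u. langevin (y * u) * langevin (y * (1 - u)))"
  using assms langevin_nonneg langevin_le_one
  by (intro set_integrable_Ioo_bounded[where B=1]) (auto intro!: mult_le_one)

lemma nn_integral_laplace_langevin_product:
  assumes "0 < y"
  shows "(\<integral>\<^sup>+u\<in>{0<..<1}. ennreal (exp (- p * (y * u)) * langevin (y * u))
                        * ennreal (exp (- p * (y * (1 - u))) * langevin (y * (1 - u))) \<partial>lborel)
       = ennreal (exp (- p * y) * (LBINT u:{0<..<1}. langevin (y * u) * langevin (y * (1 - u))))"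
proof -
  have nonneg: "0 \<le> langevin (y * u) * langevin (y * (1 - u))" if "u \<in> {0<..<1}" for u
    using that assms langevin_nonneg by simp
  have "ennreal (exp (- p * (y * u)) * langevin (y * u))
          * ennreal (exp (- p * (y * (1 - u))) * langevin (y * (1 - u)))
      = ennreal (exp (- p * y)) * ennreal (langevin (y * u) * langevin (y * (1 - u)))"
    if "u \<in> {0<..<1}" for u
  proof -
    have "exp (- p * (y * u)) * exp (- p * (y * (1 - u))) = exp (- p * y)"
      by (simp flip: exp_add add: algebra_simps)
    thus ?thesis
      using assms that langevin_nonneg by (simp flip: ennreal_mult' add: mult_ac)
  qed
  hence "(\<integral>\<^sup>+u\<in>{0<..<1}. ennreal (exp (- p * (y * u)) * langevin (y * u))
                        * ennreal (exp (- p * (y * (1 - u))) * langevin (y * (1 - u))) \<partial>lborel)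
      = (\<integral>\<^sup>+u\<in>{0<..<1}. ennreal (exp (- p * y)) * ennreal (langevin (y * u) * langevin (y * (1 - u)))
           \<partial>lborel)"
    by (intro set_nn_integral_cong) auto
  also have "\<dots> = ennreal (exp (- p * y))
                    * (\<integral>\<^sup>+u\<in>{0<..<1}. ennreal (langevin (y * u) * langevin (y * (1 - u))) \<partial>lborel)"
    by (simp add: nn_integral_cmult mult.assoc)
  also have "\<dots> = ennreal (exp (- p * y) * (LBINT u:{0<..<1}. langevin (y * u) * langevin (y * (1 - u))))"
    using nn_integral_eq_set_integral[OF set_integrable_langevin_product[OF assms] nonneg]
    by (simp add: ennreal_mult')
  finally show ?thesis .
qed

lemma langevin_laplace_squared:
  assumes "0 < p"
  shows "(langevin_laplace p)\<^sup>2 = (LBINT y:{0<..}. y * exp (- p * y) *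
           (LBINT u:{0<..<1}. langevin (y * u) * langevin (y * (1 - u))))"
    (is "_ = (LBINT y:{0<..}. y * exp (- p * y) * ?H y)")
proof -
  define f where "f s = ennreal (exp (- p * s) * langevin s)" for s
  have [measurable]: "f \<in> borel_measurable borel" "?H \<in> borel_measurable borel"
    unfolding f_def[abs_def] set_lebesgue_integral_def by measurable
  have H_nonneg: "0 \<le> ?H y" if "0 < y" for y
    unfolding set_lebesgue_integral_def using that langevin_nonneg
    by (intro Bochner_Integration.integral_nonneg) (simp add: indicator_def)
  have "(\<integral>\<^sup>+s\<in>{0<..}. f s \<partial>lborel) = ennreal (langevin_laplace p)"
    unfolding f_def langevin_laplace_def
    by (rule nn_integral_eq_set_integral[OF set_integrable_langevin_laplace[OF assms]])
       (simp add: langevin_nonneg)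
  hence "ennreal ((langevin_laplace p)\<^sup>2)
      = (\<integral>\<^sup>+s\<in>{0<..}. f s \<partial>lborel) * (\<integral>\<^sup>+t\<in>{0<..}. f t \<partial>lborel)"
    by (simp add: power2_eq_square ennreal_mult' langevin_laplace_nonneg)
  also have "\<dots> = (\<integral>\<^sup>+y\<in>{0<..}. ennreal y * (\<integral>\<^sup>+u\<in>{0<..<1}. f (y * u) * f (y * (1 - u)) \<partial>lborel)
                    \<partial>lborel)"
    by (rule nn_integral_Ioi_mult_convolution) measurable
  also have "\<dots> = (\<integral>\<^sup>+y\<in>{0<..}. ennreal (y * exp (- p * y) * ?H y) \<partial>lborel)"
  proof (intro set_nn_integral_cong refl)
    fix y :: real assume "y \<in> space lborel \<inter> {0<..}"
    hence "0 < y" by simp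
    thus "ennreal y * (\<integral>\<^sup>+u\<in>{0<..<1}. f (y * u) * f (y * (1 - u)) \<partial>lborel)
        = ennreal (y * exp (- p * y) * ?H y)"
      unfolding f_def nn_integral_laplace_langevin_product[OF \<open>0 < y\<close>]
      by (simp add: ennreal_mult' mult.assoc)
  qed
  finally show ?thesis
    using H_nonneg by (intro set_integral_eq_of_nn_integral(2)[symmetric]) auto
qed

theorem lemma2p1p1:
  fixes x :: real
  assumes "x > 0"
  shows "(psi_tilde x)\<^sup>2 =
    (LBINT y:{0<..}. y * exp (- 2 * x * y) *
      (LBINT u:{0<..<1}.
         - 1 + 2 * (coth y - 1 / y) * (coth (y * u) - 1 / (y * u))
         - 2 / (y * (1 - u)) * (u * (coth (y * u) - 1 / (y * u)) - (coth y - 1 / y))))"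
proof -
  have integrand: "- 1 + 2 * (coth y - 1 / y) * (coth (y * u) - 1 / (y * u))
         - 2 / (y * (1 - u)) * (u * (coth (y * u) - 1 / (y * u)) - (coth y - 1 / y))
      = - 1 + 2 * langevin_kernel y u" for y u
    by (simp add: langevin_kernel_def langevin_def ring_distribs diff_divide_distrib)
  have "(psi_tilde x)\<^sup>2 = (langevin_laplace (2 * x))\<^sup>2"
    using psi_tilde_eq_neg_langevin_laplace[OF assms] by simp
  also have "\<dots> = (LBINT y:{0<..}. y * exp (- (2 * x) * y) *
                    (LBINT u:{0<..<1}. langevin (y * u) * langevin (y * (1 - u))))"
    using assms by (intro langevin_laplace_squared) simp
  also have "\<dots> = (LBINT y:{0<..}. y * exp (- 2 * x * y) *
                    (LBINT u:{0<..<1}. - 1 + 2 * langevin_kernel y u))"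
    by (intro set_lebesgue_integral_cong) (auto simp flip: set_integral_langevin_kernel)
  finally show ?thesis by (simp only: integrand)
qed

end
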